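(* Let $h,n\geq2$. If $U\leq G$ is a symmetry group with respect to $(h,n)$, then $U$ is regular and $O(U)=U$.
   Context: Permutations compose as $(\sigma\tau)(x)=\sigma(\tau(x))$. Let $G=S_h\times S_n$ and $\mathcal{P}=(S_n)^h$ (preference profiles), with $G$ acting by $(p^{(\varphi,\psi)})_i=\psi\,p_{\varphi^{-1}(i)}$; $p^U=\{p^g:g\in U\}$. $U\leq G$ is regular if for every $p$, $\{g\in U:p^g=p\}\subseteq S_h\times\{id\}$. A social preference function (SPF) is any $F:\mathcal{P}\to S_n$; $G(F)=\{(\varphi,\psi)\in G: F(p^{(\varphi,\psi)})=\psi F(p)\ \forall p\}$; $U$ is a symmetry group with respect to $(h,n)$ if $U=G(F)$ for some SPF $F$. For regular $U$, $\mathcal{A}(U)$ is the set of regular $V\leq G$ with $V\geq U$ and $p^V\subseteq p^U$ for all $p$, and $O(U)=\langle\mathcal{A}(U)\rangle$. *)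

theory Defs
  imports "HOL-Combinatorics.Permutations" "HOL-Algebra.Generated_Groups"
begin

text \<open>Voters are 0..h-1, alternatives are 0..n-1. Permutations are functions
  on nat that permute the relevant index set (identity outside).\<close>

definition perms :: "nat \<Rightarrow> (nat \<Rightarrow> nat) set" where
  "perms k = {\<sigma>. \<sigma> permutes {..<k}}"

definition Ggrp :: "nat \<Rightarrow> nat \<Rightarrow> ((nat \<Rightarrow> nat) \<times> (nat \<Rightarrow> nat)) monoid" where
  "Ggrp h n = \<lparr> carrier = perms h \<times> perms n,
               mult = (\<lambda>a b. (fst a \<circ> fst b, snd a \<circ> snd b)),
               one = (id, id) \<rparr>"

definition profiles :: "nat \<Rightarrow> nat \<Rightarrow> (nat \<Rightarrow> nat \<Rightarrow> nat) set" where
  "profiles h n = {p. (\<forall>i<h. p i \<in> perms n) \<and> (\<forall>i\<ge>h. p i = id)}"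

definition act :: "nat \<Rightarrow> (nat \<Rightarrow> nat \<Rightarrow> nat) \<Rightarrow> (nat \<Rightarrow> nat) \<times> (nat \<Rightarrow> nat)
                    \<Rightarrow> (nat \<Rightarrow> nat \<Rightarrow> nat)" where
  "act h p g = (\<lambda>i. if i < h then snd g \<circ> p (Hilbert_Choice.inv (fst g) i) else id)"

definition orbit :: "nat \<Rightarrow> (nat \<Rightarrow> nat \<Rightarrow> nat) \<Rightarrow> ((nat \<Rightarrow> nat) \<times> (nat \<Rightarrow> nat)) set
                      \<Rightarrow> (nat \<Rightarrow> nat \<Rightarrow> nat) set" where
  "orbit h p U = act h p ` U"

definition regular :: "nat \<Rightarrow> nat \<Rightarrow> ((nat \<Rightarrow> nat) \<times> (nat \<Rightarrow> nat)) set \<Rightarrow> bool" where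
  "regular h n U \<longleftrightarrow> subgroup U (Ggrp h n) \<and>
     (\<forall>p\<in>profiles h n. {g\<in>U. act h p g = p} \<subseteq> perms h \<times> {id})"

definition is_SPF :: "nat \<Rightarrow> nat \<Rightarrow> ((nat \<Rightarrow> nat \<Rightarrow> nat) \<Rightarrow> (nat \<Rightarrow> nat)) \<Rightarrow> bool" where
  "is_SPF h n F \<longleftrightarrow> (\<forall>p\<in>profiles h n. F p \<in> perms n)"

definition symgroup_of :: "nat \<Rightarrow> nat \<Rightarrow> ((nat \<Rightarrow> nat \<Rightarrow> nat) \<Rightarrow> (nat \<Rightarrow> nat))
                           \<Rightarrow> ((nat \<Rightarrow> nat) \<times> (nat \<Rightarrow> nat)) set" where
  "symgroup_of h n F = {g \<in> perms h \<times> perms n.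
                          \<forall>p\<in>profiles h n. F (act h p g) = snd g \<circ> F p}"

definition symmetry_group :: "nat \<Rightarrow> nat \<Rightarrow> ((nat \<Rightarrow> nat) \<times> (nat \<Rightarrow> nat)) set \<Rightarrow> bool" where
  "symmetry_group h n U \<longleftrightarrow> (\<exists>F. is_SPF h n F \<and> U = symgroup_of h n F)"

definition A_set :: "nat \<Rightarrow> nat \<Rightarrow> ((nat \<Rightarrow> nat) \<times> (nat \<Rightarrow> nat)) set
                      \<Rightarrow> ((nat \<Rightarrow> nat) \<times> (nat \<Rightarrow> nat)) set set" where
  "A_set h n U = {V. regular h n V \<and> U \<subseteq> V \<and>
                     (\<forall>p\<in>profiles h n. orbit h p V \<subseteq> orbit h p U)}"

definition O_grp :: "nat \<Rightarrow> nat \<Rightarrow> ((nat \<Rightarrow> nat) \<times> (nat \<Rightarrow> nat)) set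
                      \<Rightarrow> ((nat \<Rightarrow> nat) \<times> (nat \<Rightarrow> nat)) set" where
  "O_grp h n U = generate (Ggrp h n) (\<Union> (A_set h n U))"

end

theory Submission
  imports Defs
begin

text \<open>An element of a symmetry group G(F) that fixes a profile p must satisfy F p = \<psi> F p,
  and since F p is a permutation this forces \<psi> = id: symmetry groups are regular.
  For maximality, let V be regular with U \<le> V and p^V \<subseteq> p^U. Given g \<in> V, choose u \<in> U
  with p^g = p^u; then u^-1 g \<in> V stabilises p, so by regularity g and u have the same
  second component \<psi>, whence F(p^g) = F(p^u) = \<psi> F p. Thus V \<le> G(F) = U, so U is the
  largest member of \<A>(U) and generates O(U).\<close>

lemma Ggrp_group: "group (Ggrp h n)"
proof (rule groupI)
  fix x y assume "x \<in> carrier (Ggrp h n)" "y \<in> carrier (Ggrp h n)"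
  then show "x \<otimes>\<^bsub>Ggrp h n\<^esub> y \<in> carrier (Ggrp h n)"
    by (auto simp: Ggrp_def perms_def intro: permutes_compose)
next
  show "\<one>\<^bsub>Ggrp h n\<^esub> \<in> carrier (Ggrp h n)"
    by (auto simp: Ggrp_def perms_def permutes_id)
next
  fix x y z
  show "x \<otimes>\<^bsub>Ggrp h n\<^esub> y \<otimes>\<^bsub>Ggrp h n\<^esub> z = x \<otimes>\<^bsub>Ggrp h n\<^esub> (y \<otimes>\<^bsub>Ggrp h n\<^esub> z)"
    by (simp add: Ggrp_def comp_assoc)
next
  fix x
  show "\<one>\<^bsub>Ggrp h n\<^esub> \<otimes>\<^bsub>Ggrp h n\<^esub> x = x" by (simp add: Ggrp_def)
next
  fix x assume "x \<in> carrier (Ggrp h n)"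
  then have "fst x permutes {..<h}" and "snd x permutes {..<n}"
    by (auto simp: Ggrp_def perms_def)
  then have "(Hilbert_Choice.inv (fst x), Hilbert_Choice.inv (snd x)) \<in> carrier (Ggrp h n)"
    and "(Hilbert_Choice.inv (fst x), Hilbert_Choice.inv (snd x)) \<otimes>\<^bsub>Ggrp h n\<^esub> x = \<one>\<^bsub>Ggrp h n\<^esub>"
    by (auto simp: Ggrp_def perms_def permutes_inv permutes_inv_o)
  then show "\<exists>y\<in>carrier (Ggrp h n). y \<otimes>\<^bsub>Ggrp h n\<^esub> x = \<one>\<^bsub>Ggrp h n\<^esub>" by blast
qed

lemma act_one: "p \<in> profiles h n \<Longrightarrow> act h p \<one>\<^bsub>Ggrp h n\<^esub> = p"
  by (auto simp: act_def profiles_def Ggrp_def inv_id fun_eq_iff)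

lemma act_mult:
  assumes "a \<in> carrier (Ggrp h n)" and "b \<in> carrier (Ggrp h n)"
  shows "act h (act h p a) b = act h p (b \<otimes>\<^bsub>Ggrp h n\<^esub> a)"
proof -
  have a: "fst a permutes {..<h}" and b: "fst b permutes {..<h}"
    using assms by (auto simp: Ggrp_def perms_def)
  have "Hilbert_Choice.inv (fst b \<circ> fst a) = Hilbert_Choice.inv (fst a) \<circ> Hilbert_Choice.inv (fst b)"
    using a b by (simp add: o_inv_distrib permutes_bij)
  moreover have "i < h \<Longrightarrow> Hilbert_Choice.inv (fst b) i < h" for i
    using permutes_in_image[OF permutes_inv[OF b]] by auto
  ultimately show ?thesis
    by (auto simp: act_def Ggrp_def fun_eq_iff)
qed

lemma symgroup_of_stabiliser_snd_id:
  assumes "is_SPF h n F" and "p \<in> profiles h n"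
    and "g \<in> symgroup_of h n F" and "act h p g = p"
  shows "snd g = id"
proof -
  have "surj (F p)"
    using assms(1,2) by (auto simp: is_SPF_def perms_def permutes_bij bij_is_surj)
  then have Fp_inv: "F p \<circ> Hilbert_Choice.inv (F p) = id"
    by (simp add: surj_iff)
  have "F p = snd g \<circ> F p"
    using assms(2-4) by (auto simp: symgroup_of_def)
  then have "F p \<circ> Hilbert_Choice.inv (F p) = snd g \<circ> F p \<circ> Hilbert_Choice.inv (F p)"
    by (rule arg_cong[where f = "\<lambda>f. f \<circ> Hilbert_Choice.inv (F p)"])
  then show ?thesis
    by (simp add: comp_assoc Fp_inv)
qed

lemma symgroup_of_regular:
  assumes "is_SPF h n F" and "subgroup (symgroup_of h n F) (Ggrp h n)"
  shows "regular h n (symgroup_of h n F)"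
  unfolding regular_def
proof (intro conjI ballI subsetI)
  fix p g assume p: "p \<in> profiles h n" and "g \<in> {g \<in> symgroup_of h n F. act h p g = p}"
  then have g: "g \<in> symgroup_of h n F" and fixes_p: "act h p g = p"
    by auto
  have "snd g = id"
    by (rule symgroup_of_stabiliser_snd_id[OF assms(1) p g fixes_p])
  moreover have "fst g \<in> perms h"
    using g by (auto simp: symgroup_of_def)
  ultimately show "g \<in> perms h \<times> {id}"
    by (simp add: mem_Times_iff)
qed (fact assms(2))

lemma regular_act_eq_imp_snd_eq:
  assumes "regular h n V" and "p \<in> profiles h n"
    and "g \<in> V" and "u \<in> V" and "act h p g = act h p u"
  shows "snd g = snd u"
proof -
  let ?G = "Ggrp h n"
  interpret group ?G by (rule Ggrp_group)
  have V: "subgroup V ?G"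
    using assms(1) by (simp add: regular_def)
  have g: "g \<in> carrier ?G" and u: "u \<in> carrier ?G" and u': "inv\<^bsub>?G\<^esub> u \<in> carrier ?G"
    using assms(3,4) subgroup.subset[OF V] by auto
  define w where "w = inv\<^bsub>?G\<^esub> u \<otimes>\<^bsub>?G\<^esub> g"
  have "w \<in> V"
    unfolding w_def using V assms(3,4) by (simp add: subgroup.m_closed subgroup.m_inv_closed)
  moreover have "act h p w = p"
  proof -
    have "act h p w = act h (act h p g) (inv\<^bsub>?G\<^esub> u)"
      unfolding w_def using act_mult[OF g u', where p = p] by simp
    also have "\<dots> = act h (act h p u) (inv\<^bsub>?G\<^esub> u)"
      using assms(5) by simp
    also have "\<dots> = act h p \<one>\<^bsub>?G\<^esub>"
      using act_mult[OF u u', where p = p] u by simp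
    finally show ?thesis
      using act_one[OF assms(2)] by simp
  qed
  moreover have "{g \<in> V. act h p g = p} \<subseteq> perms h \<times> {id}"
    using assms(1,2) by (simp add: regular_def)
  ultimately have "snd w = id"
    by auto
  moreover have "g = u \<otimes>\<^bsub>?G\<^esub> w"
    unfolding w_def using g u by (simp add: m_assoc[symmetric])
  ultimately show ?thesis
    by (simp add: Ggrp_def)
qed

lemma A_set_symgroup_of_subset:
  assumes "V \<in> A_set h n (symgroup_of h n F)"
  shows "V \<subseteq> symgroup_of h n F"
proof
  let ?U = "symgroup_of h n F"
  fix g assume "g \<in> V"
  have V: "regular h n V" "?U \<subseteq> V" "\<And>p. p \<in> profiles h n \<Longrightarrow> orbit h p V \<subseteq> orbit h p ?U"
    using assms by (auto simp: A_set_def)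
  have "F (act h p g) = snd g \<circ> F p" if p: "p \<in> profiles h n" for p
  proof -
    obtain u where u: "u \<in> ?U" and gu: "act h p g = act h p u"
      using V(3)[OF p] \<open>g \<in> V\<close> by (auto simp: orbit_def)
    have "snd g = snd u"
      using regular_act_eq_imp_snd_eq[OF V(1) p \<open>g \<in> V\<close> _ gu] u V(2) by blast
    with u p gu show ?thesis
      by (auto simp: symgroup_of_def)
  qed
  moreover have "g \<in> carrier (Ggrp h n)"
    using V(1) \<open>g \<in> V\<close> subgroup.subset by (auto simp: regular_def)
  ultimately show "g \<in> ?U"
    by (simp add: symgroup_of_def Ggrp_def)
qed

theorem mainTheorem16:
  fixes h n :: nat and U :: "((nat \<Rightarrow> nat) \<times> (nat \<Rightarrow> nat)) set"
  assumes "h \<ge> 2" and "n \<ge> 2"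
    and "subgroup U (Ggrp h n)"
    and "symmetry_group h n U"
  shows "regular h n U \<and> O_grp h n U = U"
proof -
  obtain F where F: "is_SPF h n F" and U: "U = symgroup_of h n F"
    using assms(4) unfolding symmetry_group_def by blast
  have reg: "regular h n U"
    using symgroup_of_regular[OF F] assms(3) U by simp
  have "U \<in> A_set h n U"
    using reg by (simp add: A_set_def)
  then have "\<Union> (A_set h n U) = U"
    unfolding U by (intro equalityI Union_least A_set_symgroup_of_subset Union_upper)
  moreover have "generate (Ggrp h n) U = U"
    using group.generate_subgroup_incl[OF Ggrp_group order_refl assms(3)]
    by (auto intro: generate.incl)
  ultimately show ?thesis
    using reg by (simp add: O_grp_def)
qed

end
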